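(* A tournament is unary FA-presentable if and only if it is isomorphic to one obtained by propagating a unary FA-foundational tournament (i.e. a unary FA-foundational binary relation $(Q,\rho)$ in which $(Q,\rho)$ is a tournament).
   Context: A tournament is a structure $(X,\rightarrow)$ with $\rightarrow$ a binary relation such that $x\not\rightarrow x$ for all $x$, and for all distinct $x,y$ exactly one of $x\rightarrow y$, $y\rightarrow x$ holds. A structure is unary FA-presentable if there exist a regular language $L\subseteq a^*$ and a surjection $\phi:L\to X$ such that for equality and for the relation, the set of pairs $(u,v)\in L^2$ whose images are related is regular (the set of words $\mathrm{conv}(u,v)$ over $\{a,\$\}^2$, reading both words in parallel with the shorter padded by $\$$, is a regular language). A unary FA-foundational binary relation is a finite set $Q$ with a relation $\rho$ and pairwise disjoint five-element subsets (seeds) $P_k=\{p^{(k)}_1,\dots,p^{(k)}_5\}$, $0\le k\le n-1$ ($n\ge0$), such that with $Q'=Q\setminus\bigcup_k P_k$, for all $k,l$ (possibly equal) and $q\in Q'$: (1) the statements $p^{(k)}_i\rho p^{(l)}_i$ ($1\le i\le5$) are all true or all false; (2) the statements $p^{(k)}_i\rho p^{(l)}_{i+1}$ ($1\le i\le4$) are all true or all false; (3) the statements $p^{(k)}_{i+1}\rho p^{(l)}_i$ ($1\le i\le 4$) are all true or all false; (4) the statements $p^{(k)}_i\rho p^{(l)}_j$ with $j-i\ge2$ are all true or all false; (5) the statements $p^{(k)}_j\rho p^{(l)}_i$ with $j-i\ge2$ are all true or all false; (6) the statements $q\rho p^{(k)}_i$ ($2\le i\le5$) are all true or all false; (7) the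 statements $p^{(k)}_i\rho q$ ($2\le i\le 5$) are all true or all false. Propagation yields $(\hat Q,\hat\rho)$ with $\hat Q=Q'\cup\{p^{(k)}_i:0\le k<n,\ i\in\mathbb{N}\}$ ($\mathbb{N}=\{1,2,\dots\}$, new elements for $i\ge6$) and: $\hat\rho=\rho$ on $Q'$; $p^{(k)}_i\hat\rho p^{(l)}_j$ iff [$j=i$ and $p^{(k)}_1\rho p^{(l)}_1$] or [$j=i+1$ and $p^{(k)}_1\rho p^{(l)}_2$] or [$j=i-1$ and $p^{(k)}_2\rho p^{(l)}_1$] or [$j\ge i+2$ and $p^{(k)}_1\rho p^{(l)}_3$] or [$j\le i-2$ and $p^{(k)}_3\rho p^{(l)}_1$]; for $q\in Q'$: $q\hat\rho p^{(k)}_1$ iff $q\rho p^{(k)}_1$, $q\hat\rho p^{(k)}_i$ ($i\ge2$) iff $q\rho p^{(k)}_2$, $p^{(k)}_1\hat\rho q$ iff $p^{(k)}_1\rho q$, $p^{(k)}_i\hat\rho q$ ($i\ge2$) iff $p^{(k)}_2\rho q$. *)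

theory Defs
  imports Main
begin

definition regular_lang :: "'b list set \<Rightarrow> bool" where
  "regular_lang L \<longleftrightarrow>
     (\<exists>(S :: nat set) (\<delta> :: nat \<Rightarrow> 'b \<Rightarrow> nat) q0 F.
        finite S \<and> q0 \<in> S \<and> (\<forall>q\<in>S. \<forall>x. \<delta> q x \<in> S) \<and> F \<subseteq> S \<and>
        L = {w. foldl \<delta> q0 w \<in> F})"

text \<open>Padded alphabet letters: SymA is the letter a, SymPad is the padding symbol \$.\<close>
datatype sym = SymA | SymPad

text \<open>Unary words over the one-letter alphabet {a} are lists over unit.
 conv u v reads u and v in parallel, padding the shorter one with \$.\<close>
definition conv :: "unit list \<Rightarrow> unit list \<Rightarrow> (sym \<times> sym) list" where
  "conv u v = map (\<lambda>i. (if i < length u then SymA else SymPad,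
                        if i < length v then SymA else SymPad))
                  [0..<max (length u) (length v)]"

definition tournament :: "'a set \<Rightarrow> ('a \<Rightarrow> 'a \<Rightarrow> bool) \<Rightarrow> bool" where
  "tournament X R \<longleftrightarrow> (\<forall>x\<in>X. \<not> R x x) \<and>
     (\<forall>x\<in>X. \<forall>y\<in>X. x \<noteq> y \<longrightarrow> (R x y \<longleftrightarrow> \<not> R y x))"

definition isomorphic ::
  "'a set \<Rightarrow> ('a \<Rightarrow> 'a \<Rightarrow> bool) \<Rightarrow> 'b set \<Rightarrow> ('b \<Rightarrow> 'b \<Rightarrow> bool) \<Rightarrow> bool" where
  "isomorphic X R Y S \<longleftrightarrow>
     (\<exists>f. bij_betw f X Y \<and> (\<forall>x\<in>X. \<forall>y\<in>X. R x y \<longleftrightarrow> S (f x) (f y)))"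

definition unary_FA_presentable :: "'a set \<Rightarrow> ('a \<Rightarrow> 'a \<Rightarrow> bool) \<Rightarrow> bool" where
  "unary_FA_presentable X R \<longleftrightarrow>
     (\<exists>(L :: unit list set) (\<phi> :: unit list \<Rightarrow> 'a).
        regular_lang L \<and> \<phi> ` L = X \<and>
        regular_lang {conv u v | u v. u \<in> L \<and> v \<in> L \<and> \<phi> u = \<phi> v} \<and>
        regular_lang {conv u v | u v. u \<in> L \<and> v \<in> L \<and> R (\<phi> u) (\<phi> v)})"

text \<open>Seeds: p k i is the element p^{(k)}_i, for k < n and 1 \<le> i \<le> 5.\<close>

definition seed_elems :: "nat \<Rightarrow> (nat \<Rightarrow> nat \<Rightarrow> 'q) \<Rightarrow> 'q set" where
  "seed_elems n p = {p k i | k i. k < n \<and> 1 \<le> i \<and> i \<le> 5}"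

definition unary_FA_foundational ::
  "'q set \<Rightarrow> ('q \<Rightarrow> 'q \<Rightarrow> bool) \<Rightarrow> nat \<Rightarrow> (nat \<Rightarrow> nat \<Rightarrow> 'q) \<Rightarrow> bool" where
  "unary_FA_foundational Q \<rho> n p \<longleftrightarrow>
     finite Q \<and>
     seed_elems n p \<subseteq> Q \<and>
     inj_on (\<lambda>(k, i). p k i) {(k, i). k < n \<and> 1 \<le> i \<and> i \<le> 5} \<and>
     (\<forall>k<n. \<forall>l<n.
        \<comment> \<open>(1)\<close>
        (\<forall>i\<in>{1..5}. \<forall>j\<in>{1..5}. \<rho> (p k i) (p l i) \<longleftrightarrow> \<rho> (p k j) (p l j)) \<and>
        \<comment> \<open>(2)\<close>
        (\<forall>i\<in>{1..4}. \<forall>j\<in>{1..4}. \<rho> (p k i) (p l (i+1)) \<longleftrightarrow> \<rho> (p k j) (p l (j+1))) \<and>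
        \<comment> \<open>(3)\<close>
        (\<forall>i\<in>{1..4}. \<forall>j\<in>{1..4}. \<rho> (p k (i+1)) (p l i) \<longleftrightarrow> \<rho> (p k (j+1)) (p l j)) \<and>
        \<comment> \<open>(4)\<close>
        (\<forall>i\<in>{1..5}. \<forall>j\<in>{1..5}. \<forall>i'\<in>{1..5}. \<forall>j'\<in>{1..5}.
           i + 2 \<le> j \<longrightarrow> i' + 2 \<le> j' \<longrightarrow> (\<rho> (p k i) (p l j) \<longleftrightarrow> \<rho> (p k i') (p l j'))) \<and>
        \<comment> \<open>(5)\<close>
        (\<forall>i\<in>{1..5}. \<forall>j\<in>{1..5}. \<forall>i'\<in>{1..5}. \<forall>j'\<in>{1..5}.
           i + 2 \<le> j \<longrightarrow> i' + 2 \<le> j' \<longrightarrow> (\<rho> (p k j) (p l i) \<longleftrightarrow> \<rho> (p k j') (p l i')))) \<and>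
     (\<forall>k<n. \<forall>q \<in> Q - seed_elems n p.
        \<comment> \<open>(6)\<close>
        (\<forall>i\<in>{2..5}. \<forall>j\<in>{2..5}. \<rho> q (p k i) \<longleftrightarrow> \<rho> q (p k j)) \<and>
        \<comment> \<open>(7)\<close>
        (\<forall>i\<in>{2..5}. \<forall>j\<in>{2..5}. \<rho> (p k i) q \<longleftrightarrow> \<rho> (p k j) q))"

text \<open>Propagation. The element p^{(k)}_i of the propagated structure (k < n, i \<ge> 1) is
 represented by Inr (k, i); elements q of Q' = Q minus the seeds are represented by Inl q.\<close>

definition propagate_carrier ::
  "'q set \<Rightarrow> nat \<Rightarrow> (nat \<Rightarrow> nat \<Rightarrow> 'q) \<Rightarrow> ('q + nat \<times> nat) set" where
  "propagate_carrier Q n p =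
     Inl ` (Q - seed_elems n p) \<union> {Inr (k, i) | k i. k < n \<and> 1 \<le> i}"

fun propagate_rel ::
  "('q \<Rightarrow> 'q \<Rightarrow> bool) \<Rightarrow> (nat \<Rightarrow> nat \<Rightarrow> 'q) \<Rightarrow>
   ('q + nat \<times> nat) \<Rightarrow> ('q + nat \<times> nat) \<Rightarrow> bool" where
  "propagate_rel \<rho> p (Inl q) (Inl q') = \<rho> q q'"
| "propagate_rel \<rho> p (Inr (k, i)) (Inr (l, j)) =
     ((j = i \<and> \<rho> (p k 1) (p l 1)) \<or>
      (j = i + 1 \<and> \<rho> (p k 1) (p l 2)) \<or>
      (j + 1 = i \<and> \<rho> (p k 2) (p l 1)) \<or>
      (i + 2 \<le> j \<and> \<rho> (p k 1) (p l 3)) \<or>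
      (j + 2 \<le> i \<and> \<rho> (p k 3) (p l 1)))"
| "propagate_rel \<rho> p (Inl q) (Inr (k, i)) =
     (if i = 1 then \<rho> q (p k 1) else \<rho> q (p k 2))"
| "propagate_rel \<rho> p (Inr (k, i)) (Inl q) =
     (if i = 1 then \<rho> (p k 1) q else \<rho> (p k 2) q)"

end

theory Submission
  imports Defs
begin

text \<open>A unary automaton reading two lengths x, y in parallel ends up, after the common
  prefix, iterating one letter on a finite state set; its behaviour therefore depends only on
  the position of x, y and y - x in an eventually periodic lasso (threshold T, period P)
  together with the order of x and y.  Conversely every relation on lengths invariant under
  this lasso data is automatic.  Hence a unary presentation is the same as a set of lengths
  with a map onto the structure whose membership, equality and relation are all invariant
  under the lasso data.

  Given such a presentation, keep the least length representing each element.  Beyond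
  2T + P the set of representatives is P-periodic, so it splits into finitely many elements
  below 2T + P and finitely many arithmetic progressions with difference P.  Two elements
  of one progression, or of two progressions, are related according to their offset, which
  only matters up to -2, ..., 2; so five members of each progression form the seeds of a
  unary FA-foundational tournament whose propagation is the given one.  Conversely a
  propagated structure is presented by coding p^{(k)}_i as i N + k for large N.\<close>

section \<open>Convolutions of unary words\<close>

lemma unit_list_eq_iff: "(u :: unit list) = v \<longleftrightarrow> length u = length v"
  by (simp add: list_eq_iff_nth_eq)

lemma replicate_length_unit_list [simp]: "replicate (length u) () = u"
  by (simp add: unit_list_eq_iff)

lemma image_length_unit_lists: "length ` {w :: unit list. length w \<in> A} = A"
proof
  show "A \<subseteq> length ` {w :: unit list. length w \<in> A}"
    by (intro subsetI image_eqI[of _ _ "replicate x ()" for x]) simp_all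
qed auto

lemma image_replicate_lengths: "(\<lambda>x. replicate x ()) ` {x. replicate x () \<in> L} = L"
proof
  show "L \<subseteq> (\<lambda>x. replicate x ()) ` {x. replicate x () \<in> L}"
  proof
    fix u assume "u \<in> L"
    then show "u \<in> (\<lambda>x. replicate x ()) ` {x. replicate x () \<in> L}"
      by (intro image_eqI[of _ _ "length u"]) simp_all
  qed
qed auto

abbreviation convn :: "nat \<Rightarrow> nat \<Rightarrow> (sym \<times> sym) list" where
  "convn x y \<equiv> conv (replicate x ()) (replicate y ())"

lemma conv_replicate:
  "convn x y = replicate (min x y) (SymA, SymA) @ replicate (x - y) (SymA, SymPad)
      @ replicate (y - x) (SymPad, SymA)"
  by (rule nth_equalityI) (auto simp: conv_def nth_append min_def)

lemma conv_eq_convn: "conv u v = convn (length u) (length v)"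
  by simp

lemma length_filter_conv:
  "length (filter (\<lambda>c. fst c = SymA) (conv u v)) = length u"
  "length (filter (\<lambda>c. snd c = SymA) (conv u v)) = length v"
  unfolding conv_eq_convn[of u v] conv_replicate by (simp_all add: filter_replicate)

lemma conv_eq_iff: "conv u v = conv u' v' \<longleftrightarrow> u = u' \<and> v = v'"
proof
  assume eq: "conv u v = conv u' v'"
  have "length u = length u'" "length v = length v'"
    using length_filter_conv[of u v] length_filter_conv[of u' v'] unfolding eq by simp_all
  then show "u = u' \<and> v = v'" by (simp add: unit_list_eq_iff)
qed simp

lemma convn_in_conv_set: "convn x y \<in> {conv u v | u v. G u v} \<longleftrightarrow> G (replicate x ()) (replicate y ())"
  by (auto simp: conv_eq_iff)

lemma convn_snoc:
  "convn (Suc x) (Suc x) = convn x x @ [(SymA, SymA)]"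
  "y \<le> x \<Longrightarrow> convn (Suc x) y = convn x y @ [(SymA, SymPad)]"
  "x \<le> y \<Longrightarrow> convn x (Suc y) = convn x y @ [(SymPad, SymA)]"
  unfolding conv_replicate by (simp_all add: replicate_append_same Suc_diff_le min_def)

lemma regular_lang_finite_states:
  fixes S :: "'c set" and \<delta> :: "'c \<Rightarrow> 'b \<Rightarrow> 'c"
  assumes "finite S" "q0 \<in> S" "\<forall>q\<in>S. \<forall>x. \<delta> q x \<in> S" "F \<subseteq> S"
  shows "regular_lang {w. foldl \<delta> q0 w \<in> F}"
proof -
  obtain f :: "'c \<Rightarrow> nat" where f: "inj_on f S"
    using assms(1) finite_imp_inj_to_nat_seg by blast
  define \<delta>' where "\<delta>' = (\<lambda>n x. f (\<delta> (inv_into S f n) x))"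
  have run: "q \<in> S \<Longrightarrow> foldl \<delta>' (f q) w = f (foldl \<delta> q w) \<and> foldl \<delta> q w \<in> S" for q w
    by (induction w arbitrary: q) (use assms(3) f in \<open>simp_all add: \<delta>'_def\<close>)
  have "{w. foldl \<delta> q0 w \<in> F} = {w. foldl \<delta>' (f q0) w \<in> f ` F}"
    using run[OF assms(2)] f assms(4) by (auto dest: inj_onD)
  moreover have "\<forall>q\<in>f ` S. \<forall>x. \<delta>' q x \<in> f ` S"
    using assms(3) f by (auto simp: \<delta>'_def)
  ultimately show ?thesis unfolding regular_lang_def
    using assms by (intro exI[of _ "f ` S"] exI[of _ \<delta>'] exI[of _ "f q0"] exI[of _ "f ` F"]) auto
qed

section \<open>Lasso data and automata\<close>

definition lasso :: "nat \<Rightarrow> nat \<Rightarrow> nat \<Rightarrow> nat" where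
  "lasso T P x = (if x < T then x else T + (x - T) mod P)"

definition lasso_succ :: "nat \<Rightarrow> nat \<Rightarrow> nat \<Rightarrow> nat" where
  "lasso_succ T P a = (if Suc a < T + P then Suc a else T)"

lemma lasso_0 [simp]: "lasso T P 0 = 0"
  by (simp add: lasso_def)

lemma lasso_less: "0 < P \<Longrightarrow> lasso T P x < T + P"
  by (simp add: lasso_def)

lemma lasso_succ_less: "0 < P \<Longrightarrow> a < T + P \<Longrightarrow> lasso_succ T P a < T + P"
  by (simp add: lasso_succ_def)

lemma lasso_Suc:
  assumes "0 < P"
  shows "lasso T P (Suc x) = lasso_succ T P (lasso T P x)"
proof (cases "x < T")
  case True
  then show ?thesis using assms by (auto simp: lasso_def lasso_succ_def)
next
  case False
  then have "Suc x - T = Suc (x - T)" by simp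
  then show ?thesis using assms False mod_less_divisor[OF assms, of "x - T"]
    by (auto simp: lasso_def lasso_succ_def mod_Suc)
qed

lemma lasso_eq_below: "lasso T P x = lasso T P y \<Longrightarrow> x < T \<Longrightarrow> y = x"
  by (auto simp: lasso_def split: if_splits)

lemma lasso_add_mult: "T \<le> x \<Longrightarrow> lasso T P (x + k * P) = lasso T P x"
proof -
  assume "T \<le> x"
  then have "x + k * P - T = (x - T) + k * P" by simp
  then have "(x + k * P - T) mod P = (x - T) mod P" by (metis mod_mult_self1)
  then show ?thesis using \<open>T \<le> x\<close> by (simp add: lasso_def)
qed

definition pair_class :: "nat \<Rightarrow> nat \<Rightarrow> nat \<Rightarrow> nat \<Rightarrow> nat \<times> nat \<times> nat \<times> nat" where
  "pair_class T P x y = (if x = y then 0 else if y < x then 1 else 2,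
     lasso T P x, lasso T P y, lasso T P (if x \<le> y then y - x else x - y))"

lemma pair_class_le: "pair_class T P y (y + d) = (if d = 0 then 0 else 2, lasso T P y, lasso T P (y + d), lasso T P d)"
  by (auto simp: pair_class_def)

lemma pair_class_eqD:
  assumes "pair_class T P x y = pair_class T P x' y'"
  shows "lasso T P x = lasso T P x'" "lasso T P y = lasso T P y'" "x = y \<longleftrightarrow> x' = y'"
    "x < y \<longleftrightarrow> x' < y'" "y < x \<longleftrightarrow> y' < x'"
    "lasso T P (if x \<le> y then y - x else x - y) = lasso T P (if x' \<le> y' then y' - x' else x' - y')"
  using assms by (auto simp: pair_class_def split: if_splits)

text \<open>A deterministic automaton reading convn x y: while in state 0, 1 or 2 its state is
  pair_class T P x y for the prefix read so far, and 3 is a dead state.\<close>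

definition pair_class_step ::
    "nat \<Rightarrow> nat \<Rightarrow> nat \<times> nat \<times> nat \<times> nat \<Rightarrow> sym \<times> sym \<Rightarrow> nat \<times> nat \<times> nat \<times> nat" where
  "pair_class_step T P s c = (case s of (ph, a, b, d) \<Rightarrow>
     (case c of
        (SymA, SymA) \<Rightarrow> if ph = 0 then (0, lasso_succ T P a, lasso_succ T P b, 0) else (3, 0, 0, 0)
      | (SymA, SymPad) \<Rightarrow> if ph = 0 \<or> ph = 1 then (1, lasso_succ T P a, b, lasso_succ T P d) else (3, 0, 0, 0)
      | (SymPad, SymA) \<Rightarrow> if ph = 0 \<or> ph = 2 then (2, a, lasso_succ T P b, lasso_succ T P d) else (3, 0, 0, 0)
      | (SymPad, SymPad) \<Rightarrow> (3, 0, 0, 0)))"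

lemma foldl_replicate: "foldl \<delta> q (replicate m c) = ((\<lambda>q. \<delta> q c) ^^ m) q"
  by (induction m arbitrary: q) (simp_all add: funpow_Suc_right del: funpow.simps)

lemma foldl_convn:
  "foldl \<delta> q (convn x y) =
    (if x \<le> y then ((\<lambda>q. \<delta> q (SymPad, SymA)) ^^ (y - x)) (((\<lambda>q. \<delta> q (SymA, SymA)) ^^ x) q)
     else ((\<lambda>q. \<delta> q (SymA, SymPad)) ^^ (x - y)) (((\<lambda>q. \<delta> q (SymA, SymA)) ^^ y) q))"
  unfolding conv_replicate by (simp add: foldl_replicate min_def)

lemma foldl_pair_class_step_convn:
  assumes "0 < P"
  shows "foldl (pair_class_step T P) (0, 0, 0, 0) (convn x y) = pair_class T P x y"
proof -
  have diag: "((\<lambda>s. pair_class_step T P s (SymA, SymA)) ^^ m) (0, 0, 0, 0) = pair_class T P m m" for m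
    by (induction m) (use assms in \<open>simp_all add: pair_class_step_def pair_class_def lasso_Suc\<close>)
  have left: "((\<lambda>s. pair_class_step T P s (SymA, SymPad)) ^^ d) (pair_class T P y y) =
      pair_class T P (y + d) y" for y d
    by (induction d) (use assms in \<open>simp_all add: pair_class_step_def pair_class_def lasso_Suc\<close>)
  have right: "((\<lambda>s. pair_class_step T P s (SymPad, SymA)) ^^ d) (pair_class T P y y) =
      pair_class T P y (y + d)" for y d
    by (induction d) (use assms in \<open>simp_all add: pair_class_step_def pair_class_def lasso_Suc\<close>)
  show ?thesis
  proof (cases "x \<le> y")
    case True
    then show ?thesis using right[where y = x and d = "y - x"] by (simp add: foldl_convn diag)
  next
    case False
    then show ?thesis using left[where y = y and d = "x - y"] by (simp add: foldl_convn diag)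
  qed
qed

lemma foldl_pair_class_step_dead_or_convn:
  assumes "0 < P"
  shows "foldl (pair_class_step T P) (0, 0, 0, 0) w = (3, 0, 0, 0) \<or> (\<exists>x y. w = convn x y)"
proof (induction w rule: rev_induct)
  case Nil
  then show ?case by (intro disjI2 exI[of _ 0]) (simp add: conv_def)
next
  case (snoc c w)
  let ?run = "foldl (pair_class_step T P) (0, 0, 0, 0)"
  have run_snoc: "?run (w @ [c]) = pair_class_step T P (?run w) c" by simp
  show ?case
  proof (cases "?run w = (3, 0, 0, 0)")
    case True
    then show ?thesis unfolding run_snoc True
      by (cases c) (simp add: pair_class_step_def split: sym.split)
  next
    case False
    then obtain x y where w: "w = convn x y" using snoc by blast
    have run: "?run (convn x y @ [c]) = pair_class_step T P (pair_class T P x y) c"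
      using foldl_pair_class_step_convn[OF assms] by simp
    obtain c1 c2 where c: "c = (c1, c2)" by fastforce
    consider "x = y" "c = (SymA, SymA)" | "y \<le> x" "c = (SymA, SymPad)" | "x \<le> y" "c = (SymPad, SymA)"
      | "pair_class_step T P (pair_class T P x y) c = (3, 0, 0, 0)"
      by (cases c1; cases c2; cases x y rule: linorder_cases) (auto simp: c pair_class_step_def pair_class_def)
    then show ?thesis unfolding w run using convn_snoc by cases metis+
  qed
qed

lemma regular_conv_if_pair_class_invariant:
  assumes P: "0 < P"
    and inv: "\<And>x y x' y'. pair_class T P x y = pair_class T P x' y' \<Longrightarrow> G x y \<Longrightarrow> G x' y'"
  shows "regular_lang {conv u v | u v. G (length u) (length v)}"
proof -
  define S where "S = {0..(3::nat)} \<times> {..<T + P} \<times> {..<T + P} \<times> {..<T + P}"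
  define F where "F = {pair_class T P x y | x y. G x y}"
  let ?run = "foldl (pair_class_step T P) (0, 0, 0, 0)"
  have "{w. ?run w \<in> F} = {conv u v | u v. G (length u) (length v)}"
  proof (intro set_eqI iffI)
    fix w assume "w \<in> {w. ?run w \<in> F}"
    then obtain x' y' where run_w: "?run w = pair_class T P x' y'" and "G x' y'"
      by (auto simp: F_def)
    then have "?run w \<noteq> (3, 0, 0, 0)" by (simp add: pair_class_def)
    then obtain x y where w: "w = convn x y" using foldl_pair_class_step_dead_or_convn[OF P] by blast
    then have "pair_class T P x' y' = pair_class T P x y"
      using run_w foldl_pair_class_step_convn[OF P] by simp
    then have "G x y" using \<open>G x' y'\<close> by (rule inv)
    then show "w \<in> {conv u v | u v. G (length u) (length v)}"
      unfolding w convn_in_conv_set[of x y "\<lambda>u v. G (length u) (length v)"] by simp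
  next
    fix w assume "w \<in> {conv u v | u v. G (length u) (length v)}"
    then obtain u v where w: "w = conv u v" and "G (length u) (length v)" by blast
    then have "?run w \<in> F"
      unfolding w conv_eq_convn[of u v] foldl_pair_class_step_convn[OF P] F_def by blast
    then show "w \<in> {w. ?run w \<in> F}" by simp
  qed
  moreover have "regular_lang {w. ?run w \<in> F}"
  proof (rule regular_lang_finite_states)
    show "finite S" by (simp add: S_def)
    show "(0, 0, 0, 0) \<in> S" using P by (simp add: S_def)
    show "\<forall>q\<in>S. \<forall>x. pair_class_step T P q x \<in> S"
      using P lasso_succ_less[OF P] by (auto simp: S_def pair_class_step_def split: sym.splits)
    have "pair_class T P x y \<in> S" for x y
      using lasso_less[OF P] by (simp add: S_def pair_class_def)
    then show "F \<subseteq> S" by (auto simp: F_def)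
  qed
  ultimately show ?thesis by simp
qed

lemma regular_lengths_if_lasso_invariant:
  assumes P: "0 < P" and inv: "\<And>x x'. lasso T P x = lasso T P x' \<Longrightarrow> x \<in> A \<Longrightarrow> x' \<in> A"
  shows "regular_lang {w :: unit list. length w \<in> A}"
proof -
  define \<delta> where "\<delta> = (\<lambda>a (_ :: unit). lasso_succ T P a)"
  have run: "foldl \<delta> 0 w = lasso T P (length w)" for w
    by (induction w rule: rev_induct) (simp_all add: \<delta>_def lasso_Suc[OF P])
  have "x \<in> A \<longleftrightarrow> lasso T P x \<in> lasso T P ` A" for x
  proof
    assume "lasso T P x \<in> lasso T P ` A"
    then obtain x' where "x' \<in> A" "lasso T P x' = lasso T P x" by (auto simp: image_iff)
    then show "x \<in> A" using inv[of x' x] by simp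
  qed simp
  then have "{w :: unit list. length w \<in> A} = {w. foldl \<delta> 0 w \<in> lasso T P ` A}"
    unfolding run by blast
  moreover have "regular_lang {w. foldl \<delta> 0 w \<in> lasso T P ` A}"
    by (rule regular_lang_finite_states[where S = "{..<T + P}"])
      (use P lasso_less[OF P] lasso_succ_less[OF P] in \<open>auto simp: \<delta>_def\<close>)
  ultimately show ?thesis by simp
qed

definition periodic_from :: "(nat \<Rightarrow> 'c) \<Rightarrow> nat \<Rightarrow> nat \<Rightarrow> bool" where
  "periodic_from f T p \<longleftrightarrow> (\<forall>m\<ge>T. f (m + p) = f m)"

lemma funpow_eventually_periodic:
  assumes "finite C" "c \<in> C" "\<forall>x\<in>C. G x \<in> C"
  obtains T p where "0 < p" "periodic_from (\<lambda>m. (G ^^ m) c) T p"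
proof -
  define f where "f = (\<lambda>m. (G ^^ m) c)"
  have "f m \<in> C" for m by (induction m) (use assms in \<open>auto simp: f_def\<close>)
  then have "\<not> inj_on f {0..card C}"
    using card_inj_on_le[of f "{0..card C}" C] assms(1) by auto
  then obtain i j where ij: "i < j" "f i = f j"
    unfolding inj_on_def by (metis linorder_neqE_nat)
  have "f (m + (j - i)) = f m" if "i \<le> m" for m
  proof -
    have "m + (j - i) = (m - i) + j" using ij that by simp
    then have "f (m + (j - i)) = (G ^^ (m - i)) (f j)" by (simp add: f_def funpow_add)
    also have "\<dots> = (G ^^ (m - i)) (f i)" using ij by simp
    also have "\<dots> = (G ^^ ((m - i) + i)) c" by (simp add: f_def funpow_add)
    also have "\<dots> = f m" using that by (simp add: f_def)
    finally show ?thesis .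
  qed
  then show thesis using ij by (intro that[of "j - i" i]) (auto simp: periodic_from_def f_def)
qed

lemma periodic_from_add_mult:
  assumes "periodic_from f T p" "T \<le> m"
  shows "f (m + k * p) = f m"
proof (induction k)
  case (Suc k)
  have "f (m + Suc k * p) = f ((m + k * p) + p)" by (simp add: algebra_simps)
  also have "\<dots> = f (m + k * p)" using assms unfolding periodic_from_def by simp
  finally show ?case using Suc by simp
qed simp

lemma periodic_from_mono:
  assumes "periodic_from f T0 p0" "T0 \<le> T" "p0 dvd p"
  shows "periodic_from f T p"
  unfolding periodic_from_def
proof (intro allI impI)
  fix m assume "T \<le> m"
  obtain k where "p = p0 * k" using assms(3) by (rule dvdE)
  then show "f (m + p) = f m"
    using periodic_from_add_mult[OF assms(1), of m k] \<open>T \<le> m\<close> assms(2) by (simp add: mult.commute)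
qed

lemma periodic_from_lasso_eq:
  assumes f: "periodic_from f T p" and eq: "lasso T p x = lasso T p y"
  shows "f x = f y"
proof (cases "x < T")
  case True
  then show ?thesis using lasso_eq_below eq by metis
next
  case False
  then have "\<not> y < T" using lasso_eq_below eq by metis
  then have "f y = f (T + (y - T) mod p)"
    using periodic_from_add_mult[OF f, of "T + (y - T) mod p" "(y - T) div p"] by (simp add: add.assoc)
  moreover have "f x = f (T + (x - T) mod p)"
    using periodic_from_add_mult[OF f, of "T + (x - T) mod p" "(x - T) div p"] False by (simp add: add.assoc)
  ultimately show ?thesis using eq False \<open>\<not> y < T\<close> by (simp add: lasso_def)
qed

text \<open>All orbits of a self-map of a finite set are periodic with a common threshold and
  period: apply funpow_eventually_periodic to the induced map on the finite set of maps S \<rightarrow> S.\<close>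

lemma funpow_lasso_invariant:
  assumes S: "finite S" and g: "\<forall>q\<in>S. g q \<in> S"
  obtains T0 p0 where "0 < p0"
    "\<And>T p m m' q. T0 \<le> T \<Longrightarrow> p0 dvd p \<Longrightarrow> lasso T p m = lasso T p m' \<Longrightarrow> q \<in> S \<Longrightarrow>
      (g ^^ m) q = (g ^^ m') q"
proof -
  define C where "C = {f. \<forall>q. (q \<in> S \<longrightarrow> f q \<in> S) \<and> (q \<notin> S \<longrightarrow> f q = undefined)}"
  define G where "G = (\<lambda>h q. if q \<in> S then g (h q) else undefined)"
  define h0 where "h0 = (\<lambda>q. if q \<in> S then q else undefined)"
  have orbit: "(G ^^ m) h0 = (\<lambda>q. if q \<in> S then (g ^^ m) q else undefined)" for m
    by (induction m) (auto simp: G_def h0_def)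
  have "finite C" unfolding C_def by (rule finite_set_of_finite_funs[OF S S])
  moreover have "h0 \<in> C" by (simp add: C_def h0_def)
  moreover have "\<forall>h\<in>C. G h \<in> C" using g by (simp add: C_def G_def)
  ultimately obtain T0 p0 where "0 < p0" and per: "periodic_from (\<lambda>m. (G ^^ m) h0) T0 p0"
    by (rule funpow_eventually_periodic)
  show thesis
  proof (rule that[OF \<open>0 < p0\<close>])
    fix T p m m' q assume "T0 \<le> T" "p0 dvd p" "lasso T p m = lasso T p m'" "q \<in> S"
    then have "(G ^^ m) h0 = (G ^^ m') h0"
      using periodic_from_lasso_eq[OF periodic_from_mono[OF per]] by blast
    then have "(G ^^ m) h0 q = (G ^^ m') h0 q" by simp
    then show "(g ^^ m) q = (g ^^ m') q" using \<open>q \<in> S\<close> by (simp add: orbit)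
  qed
qed

lemma regular_lang_obtains_dfa:
  assumes "regular_lang K"
  obtains S :: "nat set" and \<delta> q0 F where "finite S" "q0 \<in> S" "\<forall>q\<in>S. \<forall>x. \<delta> q x \<in> S"
    "K = {w. foldl \<delta> q0 w \<in> F}"
  using assms unfolding regular_lang_def by blast

lemma regular_lengths_lasso_invariant:
  assumes "regular_lang (K :: unit list set)"
  obtains T0 p0 where "0 < p0" "\<And>T p x x'. T0 \<le> T \<Longrightarrow> p0 dvd p \<Longrightarrow> lasso T p x = lasso T p x' \<Longrightarrow>
     replicate x () \<in> K \<longleftrightarrow> replicate x' () \<in> K"
proof -
  obtain S :: "nat set" and \<delta> q0 F where S: "finite S" "q0 \<in> S" "\<forall>q\<in>S. \<forall>x. \<delta> q x \<in> S"
    and K: "K = {w. foldl \<delta> q0 w \<in> F}"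
    using assms by (rule regular_lang_obtains_dfa)
  obtain T0 p0 where "0 < p0" and inv: "\<And>T p m m' q. T0 \<le> T \<Longrightarrow> p0 dvd p \<Longrightarrow> lasso T p m = lasso T p m'
      \<Longrightarrow> q \<in> S \<Longrightarrow> ((\<lambda>q. \<delta> q ()) ^^ m) q = ((\<lambda>q. \<delta> q ()) ^^ m') q"
    by (rule funpow_lasso_invariant[of S "\<lambda>q. \<delta> q ()"]) (use S(1,3) in auto)
  show thesis
  proof (rule that[OF \<open>0 < p0\<close>])
    fix T p x x' assume "T0 \<le> T" "p0 dvd p" "lasso T p x = lasso T p x'"
    then have "((\<lambda>q. \<delta> q ()) ^^ x) q0 = ((\<lambda>q. \<delta> q ()) ^^ x') q0" using S(2) by (rule inv)
    then show "replicate x () \<in> K \<longleftrightarrow> replicate x' () \<in> K" by (simp add: K foldl_replicate)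
  qed
qed

lemma regular_conv_pair_class_invariant:
  assumes "regular_lang K"
  obtains T0 p0 where "0 < p0" "\<And>T p x y x' y'. T0 \<le> T \<Longrightarrow> p0 dvd p \<Longrightarrow>
     pair_class T p x y = pair_class T p x' y' \<Longrightarrow> convn x y \<in> K \<longleftrightarrow> convn x' y' \<in> K"
proof -
  obtain S :: "nat set" and \<delta> q0 F where S: "finite S" "q0 \<in> S" "\<forall>q\<in>S. \<forall>x. \<delta> q x \<in> S"
    and K: "K = {w. foldl \<delta> q0 w \<in> F}"
    using assms by (rule regular_lang_obtains_dfa)
  define g where "g = (\<lambda>c q. \<delta> q c)"
  have "\<exists>T0 p0. 0 < p0 \<and> (\<forall>T p m m' q. T0 \<le> T \<longrightarrow> p0 dvd p \<longrightarrow> lasso T p m = lasso T p m' \<longrightarrow> q \<in> S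
      \<longrightarrow> (g c ^^ m) q = (g c ^^ m') q)" for c
  proof -
    have closed: "\<forall>q\<in>S. g c q \<in> S" using S(3) unfolding g_def by blast
    obtain T0 p0 where "0 < p0" "\<And>T p m m' q. T0 \<le> T \<Longrightarrow> p0 dvd p \<Longrightarrow> lasso T p m = lasso T p m' \<Longrightarrow>
        q \<in> S \<Longrightarrow> (g c ^^ m) q = (g c ^^ m') q"
      by (rule funpow_lasso_invariant[of S "g c"]) (use S(1) closed in auto)
    then show ?thesis by blast
  qed
  then obtain T0 p0 where p0: "\<And>c. 0 < p0 c" and inv: "\<And>c T p m m' q. T0 c \<le> T \<Longrightarrow> p0 c dvd p \<Longrightarrow>
      lasso T p m = lasso T p m' \<Longrightarrow> q \<in> S \<Longrightarrow> (g c ^^ m) q = (g c ^^ m') q"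
    by (metis (no_types))
  let ?AA = "(SymA, SymA)" and ?AP = "(SymA, SymPad)" and ?PA = "(SymPad, SymA)"
  have orbit_in: "(g ?AA ^^ m) q0 \<in> S" for m
    by (induction m) (use S in \<open>auto simp: g_def\<close>)
  have run: "foldl \<delta> q0 (convn x y) = (if x \<le> y then (g ?PA ^^ (y - x)) ((g ?AA ^^ x) q0)
      else (g ?AP ^^ (x - y)) ((g ?AA ^^ y) q0))" for x y
    unfolding g_def by (rule foldl_convn)
  show thesis
  proof (rule that[of "p0 ?AA * p0 ?AP * p0 ?PA" "max (T0 ?AA) (max (T0 ?AP) (T0 ?PA))"])
    show "0 < p0 ?AA * p0 ?AP * p0 ?PA" using p0 by simp
    fix T p x y x' y'
    assume T: "max (T0 ?AA) (max (T0 ?AP) (T0 ?PA)) \<le> T" and p: "p0 ?AA * p0 ?AP * p0 ?PA dvd p"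
      and eq: "pair_class T p x y = pair_class T p x' y'"
    have inv': "(g c ^^ m) q = (g c ^^ m') q"
      if c: "c \<in> {?AA, ?AP, ?PA}" and "lasso T p m = lasso T p m'" "q \<in> S" for c m m' q
    proof (rule inv)
      show "T0 c \<le> T" using c T by auto
      have "p0 c dvd p0 ?AA * p0 ?AP * p0 ?PA" using c by auto
      then show "p0 c dvd p" using p by (rule dvd_trans)
    qed (use that in auto)
    note eqD = pair_class_eqD[OF eq]
    have "foldl \<delta> q0 (convn x y) = foldl \<delta> q0 (convn x' y')"
    proof (cases "x \<le> y")
      case True
      then have "x' \<le> y'" using eqD(5) by linarith
      moreover have "(g ?AA ^^ x) q0 = (g ?AA ^^ x') q0" using eqD(1) S(2) by (intro inv') auto
      moreover have "(g ?PA ^^ (y - x)) q = (g ?PA ^^ (y' - x')) q" if "q \<in> S" for q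
        using eqD(6) True \<open>x' \<le> y'\<close> that by (intro inv') auto
      ultimately show ?thesis using True orbit_in unfolding run by simp
    next
      case False
      then have "\<not> x' \<le> y'" using eqD(5) by linarith
      moreover have "(g ?AA ^^ y) q0 = (g ?AA ^^ y') q0" using eqD(2) S(2) by (intro inv') auto
      moreover have "(g ?AP ^^ (x - y)) q = (g ?AP ^^ (x' - y')) q" if "q \<in> S" for q
        using eqD(6) False \<open>\<not> x' \<le> y'\<close> that by (intro inv') auto
      ultimately show ?thesis using False orbit_in unfolding run by simp
    qed
    then show "convn x y \<in> K \<longleftrightarrow> convn x' y' \<in> K" by (simp add: K)
  qed
qed

section \<open>Presentations by lengths\<close>

text \<open>A unary presentation read through word lengths: a^x denotes psi x for x in Ls, and
  membership, equality and the relation only depend on the lasso data of the lengths.\<close>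

locale lasso_presentation =
  fixes Ls :: "nat set" and \<psi> :: "nat \<Rightarrow> 'a" and R :: "'a \<Rightarrow> 'a \<Rightarrow> bool" and T P :: nat
  assumes period_pos: "0 < P" and threshold_le_period: "T \<le> P"
    and lengths_invariant: "lasso T P x = lasso T P x' \<Longrightarrow> x \<in> Ls \<Longrightarrow> x' \<in> Ls"
    and eq_invariant: "pair_class T P x y = pair_class T P x' y' \<Longrightarrow>
      x \<in> Ls \<Longrightarrow> y \<in> Ls \<Longrightarrow> x' \<in> Ls \<Longrightarrow> y' \<in> Ls \<Longrightarrow> \<psi> x = \<psi> y \<Longrightarrow> \<psi> x' = \<psi> y'"
    and rel_invariant: "pair_class T P x y = pair_class T P x' y' \<Longrightarrow>
      x \<in> Ls \<Longrightarrow> y \<in> Ls \<Longrightarrow> x' \<in> Ls \<Longrightarrow> y' \<in> Ls \<Longrightarrow> R (\<psi> x) (\<psi> y) \<Longrightarrow> R (\<psi> x') (\<psi> y')"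

lemma (in lasso_presentation) unary_FA_presentable: "unary_FA_presentable (\<psi> ` Ls) R"
proof -
  define L where "L = {w :: unit list. length w \<in> Ls}"
  define \<phi> where "\<phi> = (\<lambda>w :: unit list. \<psi> (length w))"
  have pair_invariant: "pair_class T P x y = pair_class T P x' y' \<Longrightarrow> x \<in> Ls \<and> y \<in> Ls \<and> Q x y
      \<Longrightarrow> x' \<in> Ls \<and> y' \<in> Ls \<and> Q x' y'"
    if "\<And>x y x' y'. pair_class T P x y = pair_class T P x' y' \<Longrightarrow>
      x \<in> Ls \<Longrightarrow> y \<in> Ls \<Longrightarrow> x' \<in> Ls \<Longrightarrow> y' \<in> Ls \<Longrightarrow> Q x y \<Longrightarrow> Q x' y'" for Q x y x' y'
    using that lengths_invariant pair_class_eqD(1,2) by blast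
  have "length ` L = Ls" unfolding L_def by (rule image_length_unit_lists)
  moreover have "\<phi> ` L = \<psi> ` length ` L" by (simp add: \<phi>_def image_image)
  ultimately have "\<phi> ` L = \<psi> ` Ls" by simp
  moreover have "regular_lang L"
    unfolding L_def by (rule regular_lengths_if_lasso_invariant[OF period_pos lengths_invariant])
  moreover have "regular_lang {conv u v | u v. u \<in> L \<and> v \<in> L \<and> \<phi> u = \<phi> v}"
    using regular_conv_if_pair_class_invariant[OF period_pos pair_invariant[OF eq_invariant]]
    by (simp add: L_def \<phi>_def)
  moreover have "regular_lang {conv u v | u v. u \<in> L \<and> v \<in> L \<and> R (\<phi> u) (\<phi> v)}"
    using regular_conv_if_pair_class_invariant[OF period_pos pair_invariant[OF rel_invariant]]
    by (simp add: L_def \<phi>_def)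
  ultimately show ?thesis unfolding unary_FA_presentable_def by blast
qed

lemma unary_FA_presentableE:
  assumes "unary_FA_presentable X R"
  obtains Ls \<psi> T P where "lasso_presentation Ls \<psi> R T P" "\<psi> ` Ls = X"
proof -
  obtain L :: "unit list set" and \<phi> :: "unit list \<Rightarrow> 'a" where L: "regular_lang L" "\<phi> ` L = X"
    and E: "regular_lang {conv u v | u v. u \<in> L \<and> v \<in> L \<and> \<phi> u = \<phi> v}"
    and Rel: "regular_lang {conv u v | u v. u \<in> L \<and> v \<in> L \<and> R (\<phi> u) (\<phi> v)}"
    using assms unfolding unary_FA_presentable_def by blast
  define Ls where "Ls = {x. replicate x () \<in> L}"
  define \<psi> where "\<psi> = (\<lambda>x. \<phi> (replicate x ()))"
  obtain TL pL where pL: "0 < pL" and invL: "\<And>T p x x'. TL \<le> T \<Longrightarrow> pL dvd p \<Longrightarrow>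
      lasso T p x = lasso T p x' \<Longrightarrow> replicate x () \<in> L \<longleftrightarrow> replicate x' () \<in> L"
    using L(1) by (rule regular_lengths_lasso_invariant) blast
  obtain TE pE where pE: "0 < pE" and invE: "\<And>T p x y x' y'. TE \<le> T \<Longrightarrow> pE dvd p \<Longrightarrow>
      pair_class T p x y = pair_class T p x' y' \<Longrightarrow>
      convn x y \<in> {conv u v | u v. u \<in> L \<and> v \<in> L \<and> \<phi> u = \<phi> v} \<longleftrightarrow>
      convn x' y' \<in> {conv u v | u v. u \<in> L \<and> v \<in> L \<and> \<phi> u = \<phi> v}"
    using E by (rule regular_conv_pair_class_invariant) blast
  obtain TR pR where pR: "0 < pR" and invR: "\<And>T p x y x' y'. TR \<le> T \<Longrightarrow> pR dvd p \<Longrightarrow>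
      pair_class T p x y = pair_class T p x' y' \<Longrightarrow>
      convn x y \<in> {conv u v | u v. u \<in> L \<and> v \<in> L \<and> R (\<phi> u) (\<phi> v)} \<longleftrightarrow>
      convn x' y' \<in> {conv u v | u v. u \<in> L \<and> v \<in> L \<and> R (\<phi> u) (\<phi> v)}"
    using Rel by (rule regular_conv_pair_class_invariant) blast
  define T where "T = max TL (max TE TR)"
  define P where "P = pL * pE * pR * (T + 1)" \<comment> \<open>the factor T + 1 ensures T \<le> P\<close>
  have "0 < P" using pL pE pR by (simp add: P_def)
  have "T \<le> P"
  proof -
    have "1 * (T + 1) \<le> pL * pE * pR * (T + 1)" using pL pE pR by (intro mult_le_mono1) simp
    then show ?thesis by (simp add: P_def)
  qed
  have T: "TL \<le> T" "TE \<le> T" "TR \<le> T" by (simp_all add: T_def)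
  have p: "pL dvd P" "pE dvd P" "pR dvd P" by (simp_all add: P_def)
  have presentation: "lasso_presentation Ls \<psi> R T P"
  proof
    show "0 < P" "T \<le> P" by fact+
    fix x x' assume "lasso T P x = lasso T P x'" "x \<in> Ls"
    then show "x' \<in> Ls" using invL[OF T(1) p(1), of x x'] by (simp add: Ls_def)
  next
    fix x y x' y' assume eq: "pair_class T P x y = pair_class T P x' y'" and "x \<in> Ls" "y \<in> Ls"
      and "x' \<in> Ls" "y' \<in> Ls"
    then show "\<psi> x = \<psi> y \<Longrightarrow> \<psi> x' = \<psi> y'" "R (\<psi> x) (\<psi> y) \<Longrightarrow> R (\<psi> x') (\<psi> y')"
      using invE[OF T(2) p(2) eq, unfolded convn_in_conv_set]
        invR[OF T(3) p(3) eq, unfolded convn_in_conv_set] by (simp_all add: Ls_def \<psi>_def)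
  qed
  have "(\<lambda>x. replicate x ()) ` Ls = L" unfolding Ls_def by (rule image_replicate_lengths)
  moreover have "\<phi> ` (\<lambda>x. replicate x ()) ` Ls = \<psi> ` Ls" by (simp add: \<psi>_def image_image)
  ultimately have "\<psi> ` Ls = X" using L(2) by simp
  with presentation show thesis by (rule that)
qed

section \<open>Propagated structures are presentable\<close>

lemma isomorphic_unary_FA_presentable:
  assumes iso: "isomorphic X R C S" and d: "bij_betw d Ls C"
    and P: "0 < P" "T \<le> P"
    and lengths: "\<And>x x'. lasso T P x = lasso T P x' \<Longrightarrow> x \<in> Ls \<Longrightarrow> x' \<in> Ls"
    and rel: "\<And>x y x' y'. pair_class T P x y = pair_class T P x' y' \<Longrightarrow>
      x \<in> Ls \<Longrightarrow> y \<in> Ls \<Longrightarrow> x' \<in> Ls \<Longrightarrow> y' \<in> Ls \<Longrightarrow> S (d x) (d y) \<Longrightarrow> S (d x') (d y')"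
  shows "unary_FA_presentable X R"
proof -
  obtain f where f: "bij_betw f X C" and fR: "\<And>x y. x \<in> X \<Longrightarrow> y \<in> X \<Longrightarrow> R x y \<longleftrightarrow> S (f x) (f y)"
    using iso unfolding isomorphic_def by blast
  define \<psi> where "\<psi> = inv_into X f \<circ> d"
  have \<psi>: "bij_betw \<psi> Ls X" unfolding \<psi>_def by (rule bij_betw_trans[OF d bij_betw_inv_into[OF f]])
  have f\<psi>: "x \<in> Ls \<Longrightarrow> f (\<psi> x) = d x" for x
    using d f by (simp add: \<psi>_def bij_betw_inv_into_right bij_betw_apply)
  have "lasso_presentation Ls \<psi> R T P"
  proof
    show "0 < P" "T \<le> P" by (fact P)+
    show "lasso T P x = lasso T P x' \<Longrightarrow> x \<in> Ls \<Longrightarrow> x' \<in> Ls" for x x' by (rule lengths)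
  next
    fix x y x' y' assume eq: "pair_class T P x y = pair_class T P x' y'"
      and Ls: "x \<in> Ls" "y \<in> Ls" "x' \<in> Ls" "y' \<in> Ls"
    have inj: "\<psi> a = \<psi> b \<longleftrightarrow> a = b" if "a \<in> Ls" "b \<in> Ls" for a b
      using \<psi> that by (auto simp: bij_betw_def dest: inj_onD)
    show "\<psi> x = \<psi> y \<Longrightarrow> \<psi> x' = \<psi> y'"
      using pair_class_eqD(3)[OF eq] Ls by (simp add: inj)
    have "R (\<psi> a) (\<psi> b) \<longleftrightarrow> S (d a) (d b)" if "a \<in> Ls" "b \<in> Ls" for a b
      using fR[of "\<psi> a" "\<psi> b"] f\<psi> \<psi> that by (simp add: bij_betw_apply)
    then show "R (\<psi> x) (\<psi> y) \<Longrightarrow> R (\<psi> x') (\<psi> y')"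
      using rel[OF eq Ls] Ls by simp
  qed
  then have "unary_FA_presentable (\<psi> ` Ls) R" by (rule lasso_presentation.unary_FA_presentable)
  then show ?thesis using \<psi> by (simp add: bij_betw_def)
qed

text \<open>Coding of the propagated structure by lengths: the i-th element of Q' is coded by i < m,
  and p^{(k)}_i by i N + k; the class of a pair modulo threshold and period 3N then determines
  whether the two codes are equal, which seeds they belong to, and their offset clamped to
  {-2, ..., 2}, which is all that propagate_rel depends on.\<close>

definition propagate_codes :: "nat \<Rightarrow> nat \<Rightarrow> nat \<Rightarrow> nat set" where
  "propagate_codes m n N = {x. x < m \<or> (N \<le> x \<and> x mod N < n)}"

definition propagate_decode :: "'q list \<Rightarrow> nat \<Rightarrow> nat \<Rightarrow> 'q + nat \<times> nat" where
  "propagate_decode qs N x = (if x < N then Inl (qs ! x) else Inr (x mod N, x div N))"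

lemma bij_betw_propagate_decode:
  assumes qs: "set qs = Q - seed_elems n p" "distinct qs" and N: "length qs < N" "n < N"
  shows "bij_betw (propagate_decode qs N) (propagate_codes (length qs) n N) (propagate_carrier Q n p)"
    (is "bij_betw ?d ?Ls ?C")
proof -
  have "inj_on ?d ?Ls"
  proof (rule inj_onI)
    fix x y assume xy: "x \<in> ?Ls" "y \<in> ?Ls" "?d x = ?d y"
    consider "x < N" "y < N" | "\<not> x < N" "\<not> y < N" | "x < N \<longleftrightarrow> \<not> y < N" by blast
    then show "x = y"
    proof cases
      case 1
      then have "x < length qs" "y < length qs" using xy N by (auto simp: propagate_codes_def)
      then show ?thesis using 1 xy qs(2) by (simp add: propagate_decode_def nth_eq_iff_index_eq)
    next
      case 2
      then have "x mod N = y mod N" "x div N = y div N" using xy by (auto simp: propagate_decode_def)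
      then show ?thesis by (metis mult_div_mod_eq)
    qed (use xy in \<open>auto simp: propagate_decode_def split: if_splits\<close>)
  qed
  moreover have "?d ` ?Ls \<subseteq> ?C"
  proof
    fix c assume "c \<in> ?d ` ?Ls"
    then obtain x where x: "x \<in> ?Ls" "c = ?d x" by blast
    show "c \<in> ?C"
    proof (cases "x < N")
      case True
      then have "x < length qs" using x N by (auto simp: propagate_codes_def)
      then show ?thesis using True qs(1) x by (auto simp: propagate_decode_def propagate_carrier_def)
    next
      case False
      then have "x mod N < n" "0 < x div N" using x N by (auto simp: propagate_codes_def div_greater_zero_iff)
      then show ?thesis using False x by (auto simp: propagate_decode_def propagate_carrier_def)
    qed
  qed
  moreover have "?C \<subseteq> ?d ` ?Ls"
  proof
    fix c assume "c \<in> ?C"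
    then consider q where "c = Inl q" "q \<in> set qs" | k i where "c = Inr (k, i)" "k < n" "1 \<le> i"
      using qs(1) by (auto simp: propagate_carrier_def)
    then show "c \<in> ?d ` ?Ls"
    proof cases
      case 1
      then obtain x where "x < length qs" "qs ! x = q" by (metis in_set_conv_nth)
      then show ?thesis using 1 N
        by (intro image_eqI[of _ _ x]) (auto simp: propagate_decode_def propagate_codes_def)
    next
      case 2
      have "N \<le> i * N + k" using 2(3) by (metis add_increasing2 le0 mult_1 mult_le_mono1)
      then show ?thesis using 2 N
        by (intro image_eqI[of _ _ "i * N + k"]) (auto simp: propagate_decode_def propagate_codes_def)
    qed
  qed
  ultimately show ?thesis by (auto simp: bij_betw_def)
qed

lemma lasso_triple_eqD:
  assumes N: "0 < N" and eq: "lasso (3 * N) (3 * N) x = lasso (3 * N) (3 * N) x'"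
  shows "x mod N = x' mod N" "x < 3 * N \<Longrightarrow> x' = x" "x < 3 * N \<longleftrightarrow> x' < 3 * N"
proof -
  show "x < 3 * N \<Longrightarrow> x' = x" using lasso_eq_below[OF eq] .
  show below: "x < 3 * N \<longleftrightarrow> x' < 3 * N"
    using lasso_eq_below[OF eq] lasso_eq_below[OF eq[symmetric]] by auto
  show "x mod N = x' mod N"
  proof (cases "x < 3 * N")
    case True
    then show ?thesis using lasso_eq_below[OF eq] by simp
  next
    case False
    have mod_N: "a mod N = (a - 3 * N) mod (3 * N) mod N" if "\<not> a < 3 * N" for a
    proof -
      have "a mod N = ((a - 3 * N) + 3 * N) mod N" using that by simp
      also have "\<dots> = (a - 3 * N) mod N" by (rule mod_mult_self1)
      finally show ?thesis by (simp add: mod_mod_cancel)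
    qed
    have "(x - 3 * N) mod (3 * N) = (x' - 3 * N) mod (3 * N)"
      using eq False below by (simp add: lasso_def)
    then show ?thesis using mod_N[of x] mod_N[of x'] False below by simp
  qed
qed

lemma propagate_codes_lasso_invariant:
  assumes N: "m < N" and eq: "lasso (3 * N) (3 * N) x = lasso (3 * N) (3 * N) x'"
    and x: "x \<in> propagate_codes m n N"
  shows "x' \<in> propagate_codes m n N"
proof (cases "x < 3 * N")
  case True
  then show ?thesis using lasso_triple_eqD(2)[OF _ eq] N x by simp
next
  case False
  then show ?thesis using lasso_triple_eqD(1,3)[OF _ eq] N x by (auto simp: propagate_codes_def)
qed

definition clamp :: "int \<Rightarrow> int" where
  "clamp z = max (-2) (min 2 z)"

lemma propagate_rel_Inr_clamp:
  "propagate_rel \<rho> p (Inr (k, i)) (Inr (l, j)) =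
     ((clamp (int j - int i) = 0 \<and> \<rho> (p k 1) (p l 1)) \<or>
      (clamp (int j - int i) = 1 \<and> \<rho> (p k 1) (p l 2)) \<or>
      (clamp (int j - int i) = -1 \<and> \<rho> (p k 2) (p l 1)) \<or>
      (clamp (int j - int i) = 2 \<and> \<rho> (p k 1) (p l 3)) \<or>
      (clamp (int j - int i) = -2 \<and> \<rho> (p k 3) (p l 1)))"
proof -
  have "j = i \<longleftrightarrow> clamp (int j - int i) = 0" "j = i + 1 \<longleftrightarrow> clamp (int j - int i) = 1"
    "j + 1 = i \<longleftrightarrow> clamp (int j - int i) = -1" "i + 2 \<le> j \<longleftrightarrow> clamp (int j - int i) = 2"
    "j + 2 \<le> i \<longleftrightarrow> clamp (int j - int i) = -2"
    by (simp_all add: clamp_def; arith)+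
  then show ?thesis by simp
qed

lemma int_mult_div_diff:
  "int N * (int (y div N) - int (x div N)) = int y - int x - (int (y mod N) - int (x mod N))"
proof -
  have "int (a div N * N + a mod N) = int a" for a by simp
  then have "int a = int (a div N) * int N + int (a mod N)" for a by (simp only: of_nat_add of_nat_mult)
  from this[of x] this[of y] show ?thesis by (simp add: algebra_simps)
qed

lemma clamp_div_diff_far:
  fixes x y N :: nat
  assumes N: "0 < N" and far: "3 * N \<le> (if x \<le> y then y - x else x - y)"
  shows "clamp (int (y div N) - int (x div N)) = (if x < y then 2 else -2)"
proof -
  define D where "D = int (y div N) - int (x div N)"
  have "int (y mod N) < int N" "int (x mod N) < int N" using N by simp_all
  moreover have "x < y \<Longrightarrow> 3 * int N \<le> int y - int x" "\<not> x < y \<Longrightarrow> 3 * int N \<le> int x - int y"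
    using far by (cases "x \<le> y"; arith)+
  moreover have "int N * D = int y - int x - (int (y mod N) - int (x mod N))"
    unfolding D_def by (rule int_mult_div_diff)
  ultimately have "x < y \<Longrightarrow> int N * 2 < int N * D" "\<not> x < y \<Longrightarrow> int N * D < int N * (-2)"
    by linarith+
  moreover have "D \<le> 2 \<Longrightarrow> int N * D \<le> int N * 2" "-2 \<le> D \<Longrightarrow> int N * (-2) \<le> int N * D"
    using mult_left_mono[of D 2 "int N"] mult_left_mono[of "-2" D "int N"] by simp_all
  ultimately have "x < y \<Longrightarrow> 2 < D" "\<not> x < y \<Longrightarrow> D < -2" by linarith+
  then show ?thesis by (auto simp: clamp_def D_def)
qed

lemma clamp_div_diff_invariant:
  fixes x y x' y' N :: nat
  assumes N: "0 < N" and eq: "pair_class (3 * N) (3 * N) x y = pair_class (3 * N) (3 * N) x' y'"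
  shows "clamp (int (y div N) - int (x div N)) = clamp (int (y' div N) - int (x' div N))"
proof -
  note eqD = pair_class_eqD[OF eq]
  define d where "d = (if x \<le> y then y - x else x - y)"
  define d' where "d' = (if x' \<le> y' then y' - x' else x' - y')"
  have d: "lasso (3 * N) (3 * N) d = lasso (3 * N) (3 * N) d'" using eqD(6) by (simp add: d_def d'_def)
  show ?thesis
  proof (cases "d < 3 * N")
    case True
    then have "d' = d" using lasso_triple_eqD(2)[OF N d] by simp
    moreover have "x \<le> y \<longleftrightarrow> x' \<le> y'" using eqD(5) by linarith
    ultimately have "int y - int x = int y' - int x'" unfolding d_def d'_def by (cases "x \<le> y") arith+
    moreover have "x mod N = x' mod N" "y mod N = y' mod N"
      using lasso_triple_eqD(1)[OF N eqD(1)] lasso_triple_eqD(1)[OF N eqD(2)] .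
    ultimately have "int N * (int (y div N) - int (x div N)) = int N * (int (y' div N) - int (x' div N))"
      unfolding int_mult_div_diff by simp
    then show ?thesis using N by simp
  next
    case False
    then have "\<not> d' < 3 * N" using lasso_triple_eqD(3)[OF N d] by simp
    then show ?thesis using False eqD(4) clamp_div_diff_far[OF N] by (simp add: d_def d'_def)
  qed
qed

lemma lasso_triple_decode_eqD:
  assumes N: "0 < N" and eq: "lasso (3 * N) (3 * N) x = lasso (3 * N) (3 * N) x'"
  shows "x < N \<longleftrightarrow> x' < N" "x < N \<Longrightarrow> x' = x" "x mod N = x' mod N"
    "x div N = 1 \<longleftrightarrow> x' div N = 1"
proof -
  show "x mod N = x' mod N" by (rule lasso_triple_eqD(1)[OF N eq])
  have "3 \<le> b div N" if "\<not> b < 3 * N" for b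
    using div_le_mono[of "3 * N" b N] that N by simp
  then have "x' = x \<or> (\<not> x < 3 * N \<and> \<not> x' < 3 * N \<and> 3 \<le> x div N \<and> 3 \<le> x' div N)"
    using lasso_triple_eqD(2,3)[OF N eq] by blast
  then show "x < N \<longleftrightarrow> x' < N" "x < N \<Longrightarrow> x' = x" "x div N = 1 \<longleftrightarrow> x' div N = 1"
    using lasso_triple_eqD(2)[OF N eq] N by (auto simp: div_less)
qed

lemma propagate_rel_decode_invariant:
  assumes N: "0 < N" and eq: "pair_class (3 * N) (3 * N) x y = pair_class (3 * N) (3 * N) x' y'"
  shows "propagate_rel \<rho> p (propagate_decode qs N x) (propagate_decode qs N y) =
    propagate_rel \<rho> p (propagate_decode qs N x') (propagate_decode qs N y')"
proof -
  note x = lasso_triple_decode_eqD[OF N pair_class_eqD(1)[OF eq]]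
    and y = lasso_triple_decode_eqD[OF N pair_class_eqD(2)[OF eq]]
  consider "x < N" | "\<not> x < N" "y < N" | "\<not> x < N" "\<not> y < N" by blast
  then show ?thesis
  proof cases
    case 1
    then show ?thesis using x y by (cases "y < N") (simp_all add: propagate_decode_def)
  next
    case 2
    then show ?thesis using x y by (simp add: propagate_decode_def)
  next
    case 3
    then show ?thesis using x y clamp_div_diff_invariant[OF N eq]
      by (simp add: propagate_decode_def propagate_rel_Inr_clamp del: propagate_rel.simps(2))
  qed
qed

lemma propagation_unary_FA_presentable:
  assumes Q: "finite Q" and iso: "isomorphic X R (propagate_carrier Q n p) (propagate_rel \<rho> p)"
  shows "unary_FA_presentable X R"
proof -
  obtain qs where qs: "set qs = Q - seed_elems n p" "distinct qs"
    using finite_distinct_list[of "Q - seed_elems n p"] Q by blast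
  define N where "N = length qs + n + 1"
  then have N: "length qs < N" "n < N" "0 < N" by simp_all
  show ?thesis
  proof (rule isomorphic_unary_FA_presentable[OF iso bij_betw_propagate_decode[OF qs N(1,2)]])
    show "0 < 3 * N" "3 * N \<le> 3 * N" using N by simp_all
  qed (use propagate_codes_lasso_invariant[OF N(1)] propagate_rel_decode_invariant[OF N(3)] in blast)+
qed

section \<open>Presentable tournaments are propagated\<close>

lemma pair_class_add_mult:
  "T \<le> x \<Longrightarrow> T \<le> y \<Longrightarrow> pair_class T P (x + k * P) (y + k * P) = pair_class T P x y"
  unfolding pair_class_def using lasso_add_mult[of T x P k] lasso_add_mult[of T y P k] by auto

lemma pair_class_far_right:
  assumes "T \<le> y" "x < y + m * P" "x + T \<le> y + m * P" "m \<le> t"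
  shows "pair_class T P x (y + t * P) = pair_class T P x (y + m * P)"
proof -
  define d where "d = y + m * P - x"
  have d: "T \<le> d" "0 < d" "y + m * P = x + d" using assms unfolding d_def by auto
  have t: "y + t * P = x + (d + (t - m) * P)"
    using assms(2,4) unfolding d_def by (simp add: add_mult_distrib[symmetric])
  have "lasso T P (y + t * P) = lasso T P (y + m * P)"
    using lasso_add_mult[OF assms(1), of P t] lasso_add_mult[OF assms(1), of P m] by simp
  moreover have "lasso T P (d + (t - m) * P) = lasso T P d" by (rule lasso_add_mult[OF d(1)])
  ultimately show ?thesis using d unfolding t d(3) pair_class_le by simp
qed

lemma pair_class_swap:
  "pair_class T P x y = (case pair_class T P y x of (c, a, b, d) \<Rightarrow> (if c = 0 then 0 else 3 - c, b, a, d))"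
  by (auto simp: pair_class_def)

lemma pair_class_far_left:
  assumes "T \<le> y" "x < y + m * P" "x + T \<le> y + m * P" "m \<le> t"
  shows "pair_class T P (y + t * P) x = pair_class T P (y + m * P) x"
  by (subst pair_class_swap, subst (2) pair_class_swap, simp only: pair_class_far_right[OF assms])

definition seed_code :: "nat \<Rightarrow> nat \<Rightarrow> nat \<Rightarrow> nat \<Rightarrow> nat" where
  "seed_code B P r i = B + r + (i - 1) * P"

context
  fixes T P B :: nat
  assumes TP: "T \<le> P" and TB: "T \<le> B"
begin

lemma pair_class_seed_same:
  "1 \<le> i \<Longrightarrow> pair_class T P (seed_code B P r i) (seed_code B P s i) =
    pair_class T P (seed_code B P r 1) (seed_code B P s 1)"
  using pair_class_add_mult[of T "B + r" "B + s" P "i - 1"] TB unfolding seed_code_def by simp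

lemma pair_class_seed_succ:
  assumes "1 \<le> i"
  shows "pair_class T P (seed_code B P r i) (seed_code B P s (i + 1)) =
    pair_class T P (seed_code B P r 1) (seed_code B P s 2)"
proof -
  obtain a where a: "i = Suc a" using assms by (cases i) auto
  show ?thesis using pair_class_add_mult[of T "B + r" "B + s + P" P a] TB
    unfolding seed_code_def a by (simp add: algebra_simps)
qed

lemma pair_class_seed_pred:
  assumes "1 \<le> i"
  shows "pair_class T P (seed_code B P r (i + 1)) (seed_code B P s i) =
    pair_class T P (seed_code B P r 2) (seed_code B P s 1)"
proof -
  obtain a where a: "i = Suc a" using assms by (cases i) auto
  show ?thesis using pair_class_add_mult[of T "B + r + P" "B + s" P a] TB
    unfolding seed_code_def a by (simp add: algebra_simps)
qed

lemma pair_class_seed_far_succ: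
  assumes "1 \<le> i" "i + 2 \<le> j" "r < P"
  shows "pair_class T P (seed_code B P r i) (seed_code B P s j) =
    pair_class T P (seed_code B P r 1) (seed_code B P s 3)"
proof -
  obtain a where a: "i = Suc a" using assms by (cases i) auto
  obtain t where t: "j = i + t" "2 \<le> t" using assms(2) by (intro that[of "j - i"]) auto
  have "pair_class T P (seed_code B P r i) (seed_code B P s j) =
      pair_class T P (B + r + a * P) (B + s + t * P + a * P)"
    unfolding seed_code_def t a by (simp add: algebra_simps)
  also have "\<dots> = pair_class T P (B + r) (B + s + t * P)"
    by (rule pair_class_add_mult) (use TB in auto)
  also have "\<dots> = pair_class T P (B + r) (B + s + 2 * P)"
    by (rule pair_class_far_right) (use TB TP assms t in auto)
  also have "\<dots> = pair_class T P (seed_code B P r 1) (seed_code B P s 3)"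
    unfolding seed_code_def by simp
  finally show ?thesis .
qed

lemma pair_class_seed_far_pred:
  assumes "1 \<le> j" "j + 2 \<le> i" "s < P"
  shows "pair_class T P (seed_code B P r i) (seed_code B P s j) =
    pair_class T P (seed_code B P r 3) (seed_code B P s 1)"
proof -
  obtain a where a: "j = Suc a" using assms by (cases j) auto
  obtain t where t: "i = j + t" "2 \<le> t" using assms(2) by (intro that[of "i - j"]) auto
  have "pair_class T P (seed_code B P r i) (seed_code B P s j) =
      pair_class T P (B + r + t * P + a * P) (B + s + a * P)"
    unfolding seed_code_def t a by (simp add: algebra_simps)
  also have "\<dots> = pair_class T P (B + r + t * P) (B + s)"
    by (rule pair_class_add_mult) (use TB in auto)
  also have "\<dots> = pair_class T P (B + r + 2 * P) (B + s)"
    by (rule pair_class_far_left) (use TB TP assms t in auto)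
  also have "\<dots> = pair_class T P (seed_code B P r 3) (seed_code B P s 1)"
    unfolding seed_code_def by simp
  finally show ?thesis .
qed

lemma pair_class_below_seed:
  assumes "2 \<le> i" "q < B"
  shows "pair_class T P q (seed_code B P r i) = pair_class T P q (seed_code B P r 2)"
  unfolding seed_code_def by (rule pair_class_far_right) (use assms TB TP in auto)

lemma pair_class_seed_below:
  assumes "2 \<le> i" "q < B"
  shows "pair_class T P (seed_code B P r i) q = pair_class T P (seed_code B P r 2) q"
  unfolding seed_code_def by (rule pair_class_far_left) (use assms TB TP in auto)

end

definition least_reps :: "nat set \<Rightarrow> (nat \<Rightarrow> 'a) \<Rightarrow> nat set" where
  "least_reps Ls \<psi> = {x \<in> Ls. \<forall>y<x. y \<in> Ls \<longrightarrow> \<psi> y \<noteq> \<psi> x}"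

lemma bij_betw_least_reps: "bij_betw \<psi> (least_reps Ls \<psi>) (\<psi> ` Ls)"
proof -
  have "inj_on \<psi> (least_reps Ls \<psi>)"
  proof (rule inj_onI)
    fix x y assume "x \<in> least_reps Ls \<psi>" "y \<in> least_reps Ls \<psi>" "\<psi> x = \<psi> y"
    then have "\<not> x < y" "\<not> y < x" unfolding least_reps_def by auto
    then show "x = y" by simp
  qed
  moreover have "\<psi> ` Ls \<subseteq> \<psi> ` least_reps Ls \<psi>"
  proof
    fix z assume "z \<in> \<psi> ` Ls"
    then have ex: "\<exists>x. x \<in> Ls \<and> \<psi> x = z" by blast
    define x where "x = (LEAST x. x \<in> Ls \<and> \<psi> x = z)"
    have x: "x \<in> Ls \<and> \<psi> x = z" unfolding x_def by (rule LeastI_ex[OF ex])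
    have "\<not> (y \<in> Ls \<and> \<psi> y = z)" if "y < x" for y
      using not_less_Least[OF that[unfolded x_def]] .
    then have "x \<in> least_reps Ls \<psi>" using x by (auto simp: least_reps_def)
    then show "z \<in> \<psi> ` least_reps Ls \<psi>" using x by blast
  qed
  moreover have "\<psi> ` least_reps Ls \<psi> \<subseteq> \<psi> ` Ls" by (auto simp: least_reps_def)
  ultimately show ?thesis unfolding bij_betw_def by blast
qed

lemma isomorphic_via_bij:
  assumes e: "bij_betw e C A" and \<psi>: "bij_betw \<psi> A X"
    and rel: "\<And>a b. a \<in> C \<Longrightarrow> b \<in> C \<Longrightarrow> S a b \<longleftrightarrow> R (\<psi> (e a)) (\<psi> (e b))"
  shows "isomorphic X R C S"
proof -
  have h: "bij_betw (\<psi> \<circ> e) C X" using bij_betw_trans[OF e \<psi>] .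
  define f where "f = inv_into C (\<psi> \<circ> e)"
  have f: "bij_betw f X C" unfolding f_def by (rule bij_betw_inv_into[OF h])
  have "x \<in> X \<Longrightarrow> \<psi> (e (f x)) = x" for x
    unfolding f_def using bij_betw_inv_into_right[OF h] by simp
  then have "R x y \<longleftrightarrow> S (f x) (f y)" if "x \<in> X" "y \<in> X" for x y
    using rel[of "f x" "f y"] that f by (simp add: bij_betw_apply)
  with f show ?thesis unfolding isomorphic_def by blast
qed

context lasso_presentation
begin

lemma lengths_iff: "lasso T P x = lasso T P x' \<Longrightarrow> x \<in> Ls \<longleftrightarrow> x' \<in> Ls"
  using lengths_invariant lengths_invariant[OF sym] by blast

lemma eq_class_mono:
  assumes eq: "pair_class T P x y = pair_class T P x' y'" and "x \<in> Ls \<and> y \<in> Ls \<and> \<psi> x = \<psi> y"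
  shows "x' \<in> Ls \<and> y' \<in> Ls \<and> \<psi> x' = \<psi> y'"
proof -
  have "x' \<in> Ls" "y' \<in> Ls"
    using assms(2) lengths_invariant[OF pair_class_eqD(1)[OF eq]]
      lengths_invariant[OF pair_class_eqD(2)[OF eq]] by blast+
  then show ?thesis using eq_invariant[OF eq] assms(2) by blast
qed

lemma eq_class_iff:
  "pair_class T P x y = pair_class T P x' y' \<Longrightarrow>
    (x \<in> Ls \<and> y \<in> Ls \<and> \<psi> x = \<psi> y) \<longleftrightarrow> (x' \<in> Ls \<and> y' \<in> Ls \<and> \<psi> x' = \<psi> y')"
  using eq_class_mono eq_class_mono[OF sym] by blast

lemma rel_class_iff:
  assumes "pair_class T P x y = pair_class T P x' y'" "x \<in> Ls" "y \<in> Ls" "x' \<in> Ls" "y' \<in> Ls"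
  shows "R (\<psi> x) (\<psi> y) \<longleftrightarrow> R (\<psi> x') (\<psi> y')"
  using rel_invariant[OF assms] rel_invariant[OF assms(1)[symmetric] assms(4,5,2,3)] by blast

abbreviation reps :: "nat set" where
  "reps \<equiv> least_reps Ls \<psi>"

abbreviation base :: nat where
  "base \<equiv> 2 * T + P"

text \<open>A pair whose smaller element lies below base has the same lasso data after its larger
  element is moved by P, and so does a pair above T after both are moved.\<close>

lemma reps_shift:
  assumes xB: "base \<le> x"
  shows "x \<in> reps \<longleftrightarrow> x + P \<in> reps"
proof
  assume xA: "x \<in> reps"
  have shift: "lasso T P (x + 1 * P) = lasso T P x" by (rule lasso_add_mult) (use xB in simp)
  have xPL: "x + P \<in> Ls" using lengths_iff[OF shift] xA by (simp add: least_reps_def)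
  moreover have "\<not> (y \<in> Ls \<and> \<psi> y = \<psi> (x + P))" if y: "y < x + P" for y
  proof
    assume yy: "y \<in> Ls \<and> \<psi> y = \<psi> (x + P)"
    show False
    proof (cases "T + P \<le> y")
      case True
      define y' where "y' = y - P"
      have yy': "y = y' + 1 * P" "T \<le> y'" "y' < x" using True y unfolding y'_def by auto
      have "pair_class T P y (x + P) = pair_class T P y' x"
        using pair_class_add_mult[of T y' x P 1] yy' xB by simp
      then have "y' \<in> Ls \<and> \<psi> y' = \<psi> x" using eq_class_iff[of y "x + P" y' x] yy xPL by blast
      then show False using xA yy'(3) by (auto simp: least_reps_def)
    next
      case False
      have "pair_class T P y (x + 1 * P) = pair_class T P y (x + 0 * P)"
        by (rule pair_class_far_right) (use False xB in auto)
      then have "y \<in> Ls \<and> \<psi> y = \<psi> x" using eq_class_iff[of y "x + P" y x] yy xPL by simp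
      then show False using xA False xB by (auto simp: least_reps_def)
    qed
  qed
  ultimately show "x + P \<in> reps" unfolding least_reps_def by blast
next
  assume xA: "x + P \<in> reps"
  have shift: "lasso T P (x + 1 * P) = lasso T P x" by (rule lasso_add_mult) (use xB in simp)
  have xL: "x \<in> Ls" using lengths_iff[OF shift] xA by (simp add: least_reps_def)
  moreover have "\<not> (y \<in> Ls \<and> \<psi> y = \<psi> x)" if y: "y < x" for y
  proof
    assume yy: "y \<in> Ls \<and> \<psi> y = \<psi> x"
    show False
    proof (cases "T \<le> y")
      case True
      have "pair_class T P (y + 1 * P) (x + 1 * P) = pair_class T P y x"
        by (rule pair_class_add_mult) (use True xB in auto)
      then have "y + P \<in> Ls \<and> \<psi> (y + P) = \<psi> (x + P)"
        using eq_class_iff[of "y + P" "x + P" y x] yy xL by simp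
      then show False using xA y by (auto simp: least_reps_def)
    next
      case False
      have "pair_class T P y (x + 1 * P) = pair_class T P y (x + 0 * P)"
        by (rule pair_class_far_right) (use False xB in auto)
      then have "y \<in> Ls \<and> \<psi> y = \<psi> (x + P)" using eq_class_iff[of y "x + P" y x] yy xL by simp
      then show False using xA y by (auto simp: least_reps_def)
    qed
  qed
  ultimately show "x \<in> reps" unfolding least_reps_def by blast
qed

lemma reps_shift_mult: "base \<le> x \<Longrightarrow> x \<in> reps \<longleftrightarrow> x + k * P \<in> reps"
proof (induction k)
  case (Suc k)
  have "x \<in> reps \<longleftrightarrow> x + k * P \<in> reps" by (rule Suc.IH[OF Suc.prems])
  also have "\<dots> \<longleftrightarrow> x + k * P + P \<in> reps" by (rule reps_shift) (use Suc.prems in simp)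
  also have "x + k * P + P = x + Suc k * P" by simp
  finally show ?case .
qed simp

end

context lasso_presentation
begin

definition residues :: "nat list" where
  "residues = sorted_list_of_set {r. r < P \<and> base + r \<in> reps}"

definition seed :: "nat \<Rightarrow> nat \<Rightarrow> nat" where
  "seed k i = seed_code base P (residues ! k) i"

definition rho :: "nat \<Rightarrow> nat \<Rightarrow> bool" where
  "rho x y = R (\<psi> x) (\<psi> y)"

definition foundation :: "nat set" where
  "foundation = {x \<in> reps. x < base + 5 * P}"

abbreviation seeds :: nat where
  "seeds \<equiv> length residues"

lemma residues: "set residues = {r. r < P \<and> base + r \<in> reps}" "distinct residues"
  unfolding residues_def by (simp_all add: finite_subset[of _ "{..<P}"] subset_eq)

lemma residue: "k < seeds \<Longrightarrow> residues ! k < P \<and> base + residues ! k \<in> reps"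
  using nth_mem[of k residues] residues(1) by auto

lemma base_le_seed: "base \<le> seed k i"
  by (simp add: seed_def seed_code_def)

lemma seed_not_less_base: "\<not> seed k i < base"
  using base_le_seed[of k i] by simp

lemma seed_in_reps: "k < seeds \<Longrightarrow> seed k i \<in> reps"
  using reps_shift_mult[of "base + residues ! k" "i - 1"] residue[of k]
  by (simp add: seed_def seed_code_def add.assoc)

lemma seed_div_mod:
  assumes "k < seeds"
  shows "(seed k i - base) mod P = residues ! k" "(seed k i - base) div P = i - 1"
proof -
  have "seed k i - base = residues ! k + (i - 1) * P" by (simp add: seed_def seed_code_def)
  then show "(seed k i - base) mod P = residues ! k" "(seed k i - base) div P = i - 1"
    using residue[OF assms] period_pos by simp_all
qed

lemma seed_inj:
  assumes "k < seeds" "l < seeds" "1 \<le> i" "1 \<le> j" "seed k i = seed l j"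
  shows "k = l \<and> i = j"
proof -
  have "residues ! k = residues ! l" using seed_div_mod(1) assms by metis
  then have "k = l" using residues(2) assms(1,2) by (simp add: nth_eq_iff_index_eq)
  moreover have "i - 1 = j - 1" using seed_div_mod(2) assms by metis
  ultimately show ?thesis using assms(3,4) by simp
qed

lemma seed_surj:
  assumes "x \<in> reps" "base \<le> x"
  obtains k i where "k < seeds" "1 \<le> i" "i - 1 = (x - base) div P" "seed k i = x"
proof -
  define r where "r = (x - base) mod P"
  define t where "t = (x - base) div P"
  have x: "x = (base + r) + t * P" unfolding r_def t_def using assms(2) by simp
  have "base + r \<in> reps" using reps_shift_mult[of "base + r" t] x assms(1) by simp
  moreover have "r < P" unfolding r_def using period_pos by simp
  ultimately have "r \<in> set residues" using residues(1) by simp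
  then obtain k where k: "k < seeds" "residues ! k = r" by (metis in_set_conv_nth)
  have "seed k (t + 1) = x" unfolding seed_def seed_code_def k(2) x by simp
  then show thesis using k(1) by (intro that[of k "t + 1"]) (auto simp: t_def)
qed

lemma seed_elems_eq: "seed_elems seeds seed = {x \<in> reps. base \<le> x \<and> x < base + 5 * P}"
proof
  show "seed_elems seeds seed \<subseteq> {x \<in> reps. base \<le> x \<and> x < base + 5 * P}"
  proof
    fix x assume "x \<in> seed_elems seeds seed"
    then obtain k i where ki: "x = seed k i" "k < seeds" "i \<le> 5" by (auto simp: seed_elems_def)
    have "(i - 1) * P \<le> 4 * P" using ki(3) by (intro mult_le_mono1) simp
    then have "x < base + 5 * P" using residue[OF ki(2)] unfolding ki(1) seed_def seed_code_def by linarith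
    then show "x \<in> {x \<in> reps. base \<le> x \<and> x < base + 5 * P}"
      using seed_in_reps[OF ki(2)] base_le_seed ki(1) by simp
  qed
  show "{x \<in> reps. base \<le> x \<and> x < base + 5 * P} \<subseteq> seed_elems seeds seed"
  proof
    fix x assume x: "x \<in> {x \<in> reps. base \<le> x \<and> x < base + 5 * P}"
    then obtain k i where ki: "k < seeds" "1 \<le> i" "i - 1 = (x - base) div P" "seed k i = x"
      using seed_surj by blast
    have "base \<le> x" "x < base + 5 * P" using x by simp_all
    then have "x - base < 5 * P" by linarith
    then have "(x - base) div P < 5" using period_pos by (simp add: div_less_iff_less_mult)
    then have "i \<le> 5" using ki(3) by simp
    then show "x \<in> seed_elems seeds seed" using ki unfolding seed_elems_def by blast
  qed
qed

lemma foundation_base: "foundation - seed_elems seeds seed = {x \<in> reps. x < base}"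
  unfolding seed_elems_eq foundation_def by auto

lemma rho_invariant:
  assumes "pair_class T P x y = pair_class T P x' y'" "x \<in> reps" "y \<in> reps" "x' \<in> reps" "y' \<in> reps"
  shows "rho x y = rho x' y'"
  using rel_class_iff[OF assms(1)] assms(2-5) unfolding rho_def least_reps_def by blast

lemma threshold_le_base: "T \<le> base"
  by simp

lemma rho_seed:
  assumes kl: "k < seeds" "l < seeds" and i: "1 \<le> i"
  shows "rho (seed k i) (seed l i) = rho (seed k 1) (seed l 1)"
    and "rho (seed k i) (seed l (i + 1)) = rho (seed k 1) (seed l 2)"
    and "rho (seed k (i + 1)) (seed l i) = rho (seed k 2) (seed l 1)"
    and "i + 2 \<le> j \<Longrightarrow> rho (seed k i) (seed l j) = rho (seed k 1) (seed l 3)"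
    and "i + 2 \<le> j \<Longrightarrow> rho (seed l j) (seed k i) = rho (seed l 3) (seed k 1)"
proof -
  note TP = threshold_le_period and TB = threshold_le_base
  note inv = rho_invariant[OF _ seed_in_reps seed_in_reps seed_in_reps seed_in_reps]
  show "rho (seed k i) (seed l i) = rho (seed k 1) (seed l 1)"
    by (rule inv) (use pair_class_seed_same[OF TP TB i] kl in \<open>simp_all add: seed_def\<close>)
  show "rho (seed k i) (seed l (i + 1)) = rho (seed k 1) (seed l 2)"
    by (rule inv) (use pair_class_seed_succ[OF TP TB i] kl in \<open>simp_all add: seed_def\<close>)
  show "rho (seed k (i + 1)) (seed l i) = rho (seed k 2) (seed l 1)"
    by (rule inv) (use pair_class_seed_pred[OF TP TB i] kl in \<open>simp_all add: seed_def\<close>)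
  assume j: "i + 2 \<le> j"
  show "rho (seed k i) (seed l j) = rho (seed k 1) (seed l 3)"
    by (rule inv) (use pair_class_seed_far_succ[OF TP TB i j] residue kl in \<open>simp_all add: seed_def\<close>)
  show "rho (seed l j) (seed k i) = rho (seed l 3) (seed k 1)"
    by (rule inv) (use pair_class_seed_far_pred[OF TP TB i j] residue kl in \<open>simp_all add: seed_def\<close>)
qed

end

context lasso_presentation
begin

lemma rho_below_seed:
  assumes "k < seeds" "q \<in> reps" "q < base" "2 \<le> i"
  shows "rho q (seed k i) = rho q (seed k 2)" "rho (seed k i) q = rho (seed k 2) q"
proof -
  note TP = threshold_le_period and TB = threshold_le_base
  show "rho q (seed k i) = rho q (seed k 2)"
    by (rule rho_invariant)
      (use pair_class_below_seed[OF TP TB assms(4,3)] seed_in_reps assms in \<open>simp_all add: seed_def\<close>)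
  show "rho (seed k i) q = rho (seed k 2) q"
    by (rule rho_invariant)
      (use pair_class_seed_below[OF TP TB assms(4,3)] seed_in_reps assms in \<open>simp_all add: seed_def\<close>)
qed

lemma unary_FA_foundational: "unary_FA_foundational foundation rho seeds seed"
proof -
  have fin: "finite foundation" by (rule finite_subset[of _ "{..<base + 5 * P}"]) (auto simp: foundation_def)
  have sub: "seed_elems seeds seed \<subseteq> foundation" unfolding seed_elems_eq foundation_def by auto
  have inj: "inj_on (\<lambda>(k, i). seed k i) {(k, i). k < seeds \<and> 1 \<le> i \<and> i \<le> 5}"
    by (rule inj_onI) (use seed_inj in auto)
  have seed_conds: "(\<forall>i\<in>{1..5}. \<forall>j\<in>{1..5}. rho (seed k i) (seed l i) = rho (seed k j) (seed l j)) \<and>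
      (\<forall>i\<in>{1..4}. \<forall>j\<in>{1..4}. rho (seed k i) (seed l (i + 1)) = rho (seed k j) (seed l (j + 1))) \<and>
      (\<forall>i\<in>{1..4}. \<forall>j\<in>{1..4}. rho (seed k (i + 1)) (seed l i) = rho (seed k (j + 1)) (seed l j)) \<and>
      (\<forall>i\<in>{1..5}. \<forall>j\<in>{1..5}. \<forall>i'\<in>{1..5}. \<forall>j'\<in>{1..5}. i + 2 \<le> j \<longrightarrow> i' + 2 \<le> j' \<longrightarrow>
        rho (seed k i) (seed l j) = rho (seed k i') (seed l j')) \<and>
      (\<forall>i\<in>{1..5}. \<forall>j\<in>{1..5}. \<forall>i'\<in>{1..5}. \<forall>j'\<in>{1..5}. i + 2 \<le> j \<longrightarrow> i' + 2 \<le> j' \<longrightarrow>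
        rho (seed k j) (seed l i) = rho (seed k j') (seed l i'))"
    if kl: "k < seeds" "l < seeds" for k l
  proof (intro conjI ballI impI)
    fix i j :: nat assume "i \<in> {1..5}" "j \<in> {1..5}"
    then show "rho (seed k i) (seed l i) = rho (seed k j) (seed l j)"
      using rho_seed(1)[OF kl, of i] rho_seed(1)[OF kl, of j] by simp
  next
    fix i j :: nat assume "i \<in> {1..4}" "j \<in> {1..4}"
    then show "rho (seed k i) (seed l (i + 1)) = rho (seed k j) (seed l (j + 1))"
      using rho_seed(2)[OF kl, of i] rho_seed(2)[OF kl, of j] by simp
  next
    fix i j :: nat assume "i \<in> {1..4}" "j \<in> {1..4}"
    then show "rho (seed k (i + 1)) (seed l i) = rho (seed k (j + 1)) (seed l j)"
      using rho_seed(3)[OF kl, of i] rho_seed(3)[OF kl, of j] by simp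
  next
    fix i j i' j' :: nat
    assume "i \<in> {1..5}" "j \<in> {1..5}" "i' \<in> {1..5}" "j' \<in> {1..5}" "i + 2 \<le> j" "i' + 2 \<le> j'"
    then show "rho (seed k i) (seed l j) = rho (seed k i') (seed l j')"
      using rho_seed(4)[OF kl, of i j] rho_seed(4)[OF kl, of i' j'] by simp
  next
    fix i j i' j' :: nat
    assume "i \<in> {1..5}" "j \<in> {1..5}" "i' \<in> {1..5}" "j' \<in> {1..5}" "i + 2 \<le> j" "i' + 2 \<le> j'"
    then show "rho (seed k j) (seed l i) = rho (seed k j') (seed l i')"
      using rho_seed(5)[OF kl(2,1), of i j] rho_seed(5)[OF kl(2,1), of i' j'] by simp
  qed
  have base_conds: "(\<forall>i\<in>{2..5}. \<forall>j\<in>{2..5}. rho q (seed k i) = rho q (seed k j)) \<and>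
      (\<forall>i\<in>{2..5}. \<forall>j\<in>{2..5}. rho (seed k i) q = rho (seed k j) q)"
    if k: "k < seeds" and "q \<in> foundation - seed_elems seeds seed" for k q
  proof -
    have q: "q \<in> reps" "q < base" using that(2) unfolding foundation_base by simp_all
    show ?thesis
    proof (intro conjI ballI)
      fix i j :: nat assume "i \<in> {2..5}" "j \<in> {2..5}"
      then show "rho q (seed k i) = rho q (seed k j)" "rho (seed k i) q = rho (seed k j) q"
        using rho_below_seed[OF k q, of i] rho_below_seed[OF k q, of j] by simp_all
    qed
  qed
  show ?thesis unfolding unary_FA_foundational_def
  proof (intro conjI[OF fin] conjI[OF sub] conjI[OF inj] conjI)
  qed (intro allI impI ballI; rule seed_conds base_conds; assumption)+
qed

lemma tournament_foundation:
  assumes "tournament (\<psi> ` Ls) R"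
  shows "tournament foundation rho"
proof -
  have sub: "foundation \<subseteq> reps" by (auto simp: foundation_def)
  have inj: "inj_on \<psi> foundation"
    by (rule inj_on_subset[OF _ sub]) (use bij_betw_least_reps[of \<psi> Ls] in \<open>simp add: bij_betw_def\<close>)
  have img: "\<psi> x \<in> \<psi> ` Ls" if "x \<in> foundation" for x
    using that by (simp add: foundation_def least_reps_def)
  from assms have irrefl: "\<And>z. z \<in> \<psi> ` Ls \<Longrightarrow> \<not> R z z"
    and total: "\<And>z w. z \<in> \<psi> ` Ls \<Longrightarrow> w \<in> \<psi> ` Ls \<Longrightarrow> z \<noteq> w \<Longrightarrow> R z w \<longleftrightarrow> \<not> R w z"
    unfolding tournament_def by blast+
  show ?thesis unfolding tournament_def rho_def
  proof (intro conjI ballI impI)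
    fix x assume "x \<in> foundation"
    then show "\<not> R (\<psi> x) (\<psi> x)" using irrefl img by blast
  next
    fix x y assume xy: "x \<in> foundation" "y \<in> foundation" "x \<noteq> y"
    then have "\<psi> x \<noteq> \<psi> y" using inj by (auto dest: inj_onD)
    then show "R (\<psi> x) (\<psi> y) \<longleftrightarrow> \<not> R (\<psi> y) (\<psi> x)"
      using total[OF img[OF xy(1)] img[OF xy(2)]] by blast
  qed
qed

definition embed :: "nat + nat \<times> nat \<Rightarrow> nat" where
  "embed c = (case c of Inl q \<Rightarrow> q | Inr (k, i) \<Rightarrow> seed k i)"

lemma propagate_carrier_foundationE:
  assumes "a \<in> propagate_carrier foundation seeds seed"
  obtains (base) q where "a = Inl q" "q \<in> reps" "q < base"
    | (seed) k i where "a = Inr (k, i)" "k < seeds" "1 \<le> i"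
  using assms unfolding propagate_carrier_def foundation_base by blast

lemma bij_betw_embed: "bij_betw embed (propagate_carrier foundation seeds seed) reps"
proof -
  have "inj_on embed (propagate_carrier foundation seeds seed)"
  proof (rule inj_onI)
    fix a b assume a: "a \<in> propagate_carrier foundation seeds seed"
      and b: "b \<in> propagate_carrier foundation seeds seed" and eq: "embed a = embed b"
    show "a = b"
      using a b
    proof (cases rule: propagate_carrier_foundationE[OF a]; cases rule: propagate_carrier_foundationE[OF b])
      fix k i l j assume "a = Inr (k, i)" "k < seeds" "1 \<le> i" "b = Inr (l, j)" "l < seeds" "1 \<le> j"
      then show "a = b" using eq seed_inj by (simp add: embed_def)
    qed (use eq seed_not_less_base in \<open>auto simp: embed_def\<close>)
  qed
  moreover have "embed ` propagate_carrier foundation seeds seed \<subseteq> reps"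
    using seed_in_reps by (auto simp: embed_def elim: propagate_carrier_foundationE)
  moreover have "x \<in> embed ` propagate_carrier foundation seeds seed" if x: "x \<in> reps" for x
  proof (cases "x < base")
    case True
    then show ?thesis using x
      by (intro image_eqI[of _ _ "Inl x"]) (auto simp: embed_def propagate_carrier_def foundation_base)
  next
    case False
    then have "base \<le> x" by simp
    then obtain k i where "k < seeds" "1 \<le> i" "i - 1 = (x - base) div P" "seed k i = x"
      by (rule seed_surj[OF x])
    then show ?thesis
      by (intro image_eqI[of _ _ "Inr (k, i)"]) (auto simp: embed_def propagate_carrier_def)
  qed
  ultimately show ?thesis unfolding bij_betw_def by blast
qed

lemma propagate_rel_embed:
  assumes a: "a \<in> propagate_carrier foundation seeds seed" and b: "b \<in> propagate_carrier foundation seeds seed"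
  shows "propagate_rel rho seed a b \<longleftrightarrow> rho (embed a) (embed b)"
proof (cases rule: propagate_carrier_foundationE[OF a]; cases rule: propagate_carrier_foundationE[OF b])
  fix q l j assume "a = Inl q" "q \<in> reps" "q < base" "b = Inr (l, j)" "l < seeds" "1 \<le> j"
  then show ?thesis using rho_below_seed(1)[of l q j] by (simp add: embed_def)
next
  fix k i q assume "a = Inr (k, i)" "k < seeds" "1 \<le> i" "b = Inl q" "q \<in> reps" "q < base"
  then show ?thesis using rho_below_seed(2)[of k q i] by (simp add: embed_def)
next
  fix k i l j assume seeds: "a = Inr (k, i)" "k < seeds" "1 \<le> i" "b = Inr (l, j)" "l < seeds" "1 \<le> j"
  consider "j = i" | "j = i + 1" | "i = j + 1" | "i + 2 \<le> j" | "j + 2 \<le> i" by linarith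
  then show ?thesis
  proof cases
    case 1
    then show ?thesis using seeds rho_seed(1)[OF seeds(2,5,3)] by (simp add: embed_def)
  next
    case 2
    then show ?thesis using seeds rho_seed(2)[OF seeds(2,5,3)] by (simp add: embed_def)
  next
    case 3
    then show ?thesis using seeds rho_seed(3)[OF seeds(2,5,6)] by (simp add: embed_def)
  next
    case 4
    then show ?thesis using seeds rho_seed(4)[OF seeds(2,5,3) 4] by (auto simp: embed_def)
  next
    case 5
    then show ?thesis using seeds rho_seed(5)[OF seeds(5,2,6) 5] by (auto simp: embed_def)
  qed
qed (simp add: embed_def)

lemma isomorphic_propagation:
  "isomorphic (\<psi> ` Ls) R (propagate_carrier foundation seeds seed) (propagate_rel rho seed)"
  by (rule isomorphic_via_bij[OF bij_betw_embed bij_betw_least_reps])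
    (simp add: propagate_rel_embed rho_def)

end

theorem theorem5p12:
  fixes X :: "'a set" and R :: "'a \<Rightarrow> 'a \<Rightarrow> bool"
  assumes "tournament X R"
  shows "unary_FA_presentable X R \<longleftrightarrow>
    (\<exists>(Q :: nat set) (\<rho> :: nat \<Rightarrow> nat \<Rightarrow> bool) (n :: nat) (p :: nat \<Rightarrow> nat \<Rightarrow> nat).
        unary_FA_foundational Q \<rho> n p \<and> tournament Q \<rho> \<and>
        isomorphic X R (propagate_carrier Q n p) (propagate_rel \<rho> p))"
    (is "_ \<longleftrightarrow> ?propagated")
proof
  assume "unary_FA_presentable X R"
  then obtain Ls \<psi> T P where "lasso_presentation Ls \<psi> R T P" and X: "\<psi> ` Ls = X"
    by (rule unary_FA_presentableE)
  then interpret lasso_presentation Ls \<psi> R T P by simp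
  have "tournament foundation rho" using tournament_foundation assms X by simp
  moreover have "isomorphic X R (propagate_carrier foundation seeds seed) (propagate_rel rho seed)"
    using isomorphic_propagation X by simp
  ultimately show ?propagated using unary_FA_foundational by blast
next
  assume ?propagated
  then obtain Q :: "nat set" and \<rho> n p where "unary_FA_foundational Q \<rho> n p"
    and iso: "isomorphic X R (propagate_carrier Q n p) (propagate_rel \<rho> p)"
    by blast
  then have "finite Q" by (simp add: unary_FA_foundational_def)
  then show "unary_FA_presentable X R" using iso by (rule propagation_unary_FA_presentable)
qed

end
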